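(* Let $n_1,n_2,n_3\in\mathbb{N}$, let $\sigma$ be a segment label map on $G=\{1,\dots,n_1\}\times\{1,\dots,n_2\}\times\{1,\dots,n_3\}$, fix any decomposition of $T$ into blocks, let $\tau=\mathrm{LABEL}(\sigma,T)$ and let $\tau'$ be the output of the block-wise method. Then for all 0-cells $t\in T$: $\tau(t)\neq0\Rightarrow\tau'(t)\neq0$.
   Context: Voxel grid and segmentation: $G=\{1,\dots,n_1\}\times\{1,\dots,n_2\}\times\{1,\dots,n_3\}$; voxels $v,w$ are adjacent iff $\sum_i|v_i-w_i|=1$. A segment label map is $\sigma:G\to\mathbb{N}=\{1,2,\dots\}$ such that each level set $\sigma^{-1}(l)$ is connected w.r.t. this adjacency. Topological grid: $T=\{1,\dots,2n_1-1\}\times\{1,\dots,2n_2-1\}\times\{1,\dots,2n_3-1\}$; a cell with exactly $j$ odd coordinates is a $j$-cell. Voxel $r$ corresponds to the 3-cell $2r-1$. Two cells are 6-neighbors if they differ by $1$ in exactly one coordinate. For a $j$-cell $t$, $\Gamma(t)$ is the set of 6-neighbors of $t$ in $T$ that are $(j+1)$-cells. Cells $t_1,t_2$ are connected, $t_1\leftrightarrow t_2$, iff there is $t\in T$ with $t_1,t_2\in\Gamma(t)$. Procedure LABEL: for a voxel box $\prod_i\{a_i,\dots,b_i\}\subseteq G$ let $B=\prod_i\{2a_i-1,\dots,2b_i-1\}$ be its cell box. $\mathrm{LABEL}(\sigma,B)$ produces $\lambda:B\to\mathbb{N}_0$: (1) $\lambda(2r-1)=\sigma(r)$ for 3-cells.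 (2) For $j=2,1,0$ in this order: for each $j$-cell $t\in B$ let $\theta(t)$ be the set of positive integers occurring exactly once in $(\lambda(s))_{s\in\Gamma(t)}$; $t$ is active iff $\theta(t)\ne\emptyset$, inactive $j$-cells get label $0$; the active $j$-cells of $B$ are partitioned into maximal sets of cells with equal $\theta$ that are connected by $\leftrightarrow$-paths inside the set; these classes are numbered $1,\dots,m_j(B)$ arbitrarily and each active $j$-cell gets its class number. Reference labeling: $\tau=\mathrm{LABEL}(\sigma,T)$. Block-wise method: for each axis $i$ choose odd integers $1=a^i_0<\dots<a^i_{m_i}=2n_i-1$; blocks are the boxes $\prod_i\{a^i_{k_i-1},\dots,a^i_{k_i}\}$. Step 1: $\lambda_B=\mathrm{LABEL}(\sigma,B)$ for each block. Step 2: with blocks ordered $B_1,\dots,B_K$, add offset $\sum_{k'<k}m_j(B_{k'})$ to each positive $j$-cell label of $\lambda_{B_k}$ ($j\in\{0,1,2\}$). Step 3: for $j\in\{1,2\}$, via union–find, unite the labels received in different blocks by any active $j$-cell lying in several blocks, and replace every positive $j$-cell label by its set representative. Step 4: for each 0-cell $t_0$ and each pair of distinct 1-cell labels occurring exactly once among the current labels of $\Gamma(t_0)$, merge the two labels if the corresponding 1-cells bound the same set of current 2-cell labels; if any merge took place at $t_0$, recompute the activity of $t_0$ and set its label to $0$ if inactive. The result is $\tau':T\to\mathbb{N}_0$. *)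

theory Defs
  imports Main
begin

type_synonym cell = "nat \<times> nat \<times> nat"

text \<open>Number of odd coordinates: a cell with j odd coordinates is a j-cell.\<close>
definition odd_count :: "cell \<Rightarrow> nat" where
  "odd_count t = (case t of (x, y, z) \<Rightarrow>
     (if odd x then 1 else 0) + (if odd y then 1 else 0) + (if odd z then 1 else 0))"

definition nbr1 :: "nat \<Rightarrow> nat \<Rightarrow> bool" where
  "nbr1 a b \<longleftrightarrow> a = b + 1 \<or> b = a + 1"

definition six_nbr :: "cell \<Rightarrow> cell \<Rightarrow> bool" where
  "six_nbr s t \<longleftrightarrow> (case s of (x, y, z) \<Rightarrow> case t of (x', y', z') \<Rightarrow>
      (nbr1 x x' \<and> y = y' \<and> z = z') \<or> (x = x' \<and> nbr1 y y' \<and> z = z') \<or>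
      (x = x' \<and> y = y' \<and> nbr1 z z'))"

definition Vgrid :: "nat \<Rightarrow> nat \<Rightarrow> nat \<Rightarrow> cell set" where
  "Vgrid n1 n2 n3 = {1..n1} \<times> {1..n2} \<times> {1..n3}"

definition Tgrid :: "nat \<Rightarrow> nat \<Rightarrow> nat \<Rightarrow> cell set" where
  "Tgrid n1 n2 n3 = {1..2*n1-1} \<times> {1..2*n2-1} \<times> {1..2*n3-1}"

definition Gamma :: "cell set \<Rightarrow> cell \<Rightarrow> cell set" where
  "Gamma TT t = {s \<in> TT. six_nbr t s \<and> odd_count s = odd_count t + 1}"

definition connected_cells :: "cell set \<Rightarrow> cell \<Rightarrow> cell \<Rightarrow> bool" where
  "connected_cells TT t1 t2 \<longleftrightarrow> (\<exists>t\<in>TT. t1 \<in> Gamma TT t \<and> t2 \<in> Gamma TT t)"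

definition theta :: "cell set \<Rightarrow> (cell \<Rightarrow> nat) \<Rightarrow> cell \<Rightarrow> nat set" where
  "theta TT lam t = {l. 0 < l \<and> card {s \<in> Gamma TT t. lam s = l} = 1}"

text \<open>Voxel r corresponds to the 3-cell 2r-1.\<close>
definition voxel_of :: "cell \<Rightarrow> cell" where
  "voxel_of t = (case t of (x, y, z) \<Rightarrow> ((x + 1) div 2, (y + 1) div 2, (z + 1) div 2))"

definition segment_label_map :: "nat \<Rightarrow> nat \<Rightarrow> nat \<Rightarrow> (cell \<Rightarrow> nat) \<Rightarrow> bool" where
  "segment_label_map n1 n2 n3 \<sigma> \<longleftrightarrow>
     (\<forall>r\<in>Vgrid n1 n2 n3. 0 < \<sigma> r) \<and>
     (\<forall>r\<in>Vgrid n1 n2 n3. \<forall>r'\<in>Vgrid n1 n2 n3. \<sigma> r = \<sigma> r' \<longrightarrow>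
        (r, r') \<in> {(v, w). v \<in> Vgrid n1 n2 n3 \<and> w \<in> Vgrid n1 n2 n3 \<and>
                          \<sigma> v = \<sigma> r \<and> \<sigma> w = \<sigma> r \<and> six_nbr v w}\<^sup>*)"

definition cls_rel :: "cell set \<Rightarrow> cell set \<Rightarrow> (cell \<Rightarrow> nat) \<Rightarrow> nat \<Rightarrow> cell rel" where
  "cls_rel TT B lam j = {(s, s'). s \<in> B \<and> s' \<in> B \<and> odd_count s = j \<and> odd_count s' = j \<and>
      theta TT lam s \<noteq> {} \<and> theta TT lam s = theta TT lam s' \<and> connected_cells TT s s'}"

text \<open>lam is a possible result of LABEL(sigma, B) (B a cell box inside the grid TT), with
  m j = m_j(B) the number of classes of active j-cells. Values outside B are fixed to 0.\<close>
definition is_LABEL :: "cell set \<Rightarrow> (cell \<Rightarrow> nat) \<Rightarrow> cell set \<Rightarrow> (cell \<Rightarrow> nat) \<Rightarrow> (nat \<Rightarrow> nat) \<Rightarrow> bool" where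
  "is_LABEL TT \<sigma> B lam m \<longleftrightarrow>
     (\<forall>t. t \<notin> B \<longrightarrow> lam t = 0) \<and>
     (\<forall>t\<in>B. odd_count t = 3 \<longrightarrow> lam t = \<sigma> (voxel_of t)) \<and>
     (\<forall>j<3. \<forall>t\<in>B. odd_count t = j \<longrightarrow> (lam t = 0 \<longleftrightarrow> theta TT lam t = {})) \<and>
     (\<forall>j<3. lam ` {t \<in> B. odd_count t = j \<and> theta TT lam t \<noteq> {}} = {1..m j}) \<and>
     (\<forall>j<3. \<forall>t1\<in>B. \<forall>t2\<in>B. odd_count t1 = j \<longrightarrow> odd_count t2 = j \<longrightarrow>
        theta TT lam t1 \<noteq> {} \<longrightarrow> theta TT lam t2 \<noteq> {} \<longrightarrow>
        (lam t1 = lam t2 \<longleftrightarrow> (t1, t2) \<in> (cls_rel TT B lam j)\<^sup>*))"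

definition valid_axis :: "nat \<Rightarrow> nat list \<Rightarrow> bool" where
  "valid_axis n xs \<longleftrightarrow> xs \<noteq> [] \<and> hd xs = 1 \<and> last xs = 2*n-1 \<and>
     sorted_wrt (<) xs \<and> (\<forall>x\<in>set xs. odd x)"

definition block_indices :: "nat list \<Rightarrow> nat list \<Rightarrow> nat list \<Rightarrow> cell set" where
  "block_indices a1 a2 a3 = {1..<length a1} \<times> {1..<length a2} \<times> {1..<length a3}"

definition blk :: "nat list \<Rightarrow> nat list \<Rightarrow> nat list \<Rightarrow> cell \<Rightarrow> cell set" where
  "blk a1 a2 a3 k = (case k of (k1, k2, k3) \<Rightarrow>
     {a1!(k1-1)..a1!k1} \<times> {a2!(k2-1)..a2!k2} \<times> {a3!(k3-1)..a3!k3})"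

definition merge_pairs :: "cell set \<Rightarrow> (cell \<Rightarrow> nat) \<Rightarrow> cell \<Rightarrow> nat rel" where
  "merge_pairs TT c t0 = {(c e, c e') | e e'. e \<in> Gamma TT t0 \<and> e' \<in> Gamma TT t0 \<and>
      c e \<in> theta TT c t0 \<and> c e' \<in> theta TT c t0 \<and> c e \<noteq> c e' \<and>
      c ` Gamma TT e = c ` Gamma TT e'}"

text \<open>Transition of the current labelling c to c' when processing the 0-cell t0:
  merged labels are replaced (globally on 1-cells) by a union-find representative rho;
  if a merge took place, t0 gets label 0 when it has become inactive.\<close>
definition step4_at :: "cell set \<Rightarrow> (cell \<Rightarrow> nat) \<Rightarrow> (cell \<Rightarrow> nat) \<Rightarrow> cell \<Rightarrow> bool" where
  "step4_at TT c c' t0 \<longleftrightarrow>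
     (\<exists>\<rho> :: nat \<Rightarrow> nat.
        (\<forall>l l'. \<rho> l = \<rho> l' \<longleftrightarrow> (l, l') \<in> (merge_pairs TT c t0)\<^sup>*) \<and>
        (\<forall>l. (l, \<rho> l) \<in> (merge_pairs TT c t0)\<^sup>*) \<and>
        (let c1 = (\<lambda>t. if odd_count t = 1 then \<rho> (c t) else c t) in
         c' = (\<lambda>t. if t = t0 \<and> merge_pairs TT c t0 \<noteq> {} \<and> theta TT c1 t0 = {} then 0
                   else c1 t)))"

definition blockwise_output ::
  "nat \<Rightarrow> nat \<Rightarrow> nat \<Rightarrow> (cell \<Rightarrow> nat) \<Rightarrow> nat list \<Rightarrow> nat list \<Rightarrow> nat list \<Rightarrow> (cell \<Rightarrow> nat) \<Rightarrow> bool" where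
  "blockwise_output n1 n2 n3 \<sigma> a1 a2 a3 \<tau>' \<longleftrightarrow>
   (let TT = Tgrid n1 n2 n3; BI = block_indices a1 a2 a3; K = card BI in
   \<exists>(ord :: nat \<Rightarrow> cell) (lamB :: cell \<Rightarrow> cell \<Rightarrow> nat) (mB :: cell \<Rightarrow> nat \<Rightarrow> nat)
     (rep :: nat \<Rightarrow> nat \<Rightarrow> nat) (lab :: cell \<Rightarrow> nat) (ts :: cell list)
     (cs :: nat \<Rightarrow> cell \<Rightarrow> nat).
     \<comment> \<open>blocks ordered B_1..B_K\<close>
     bij_betw ord {..<K} BI \<and>
     \<comment> \<open>Step 1\<close>
     (\<forall>k\<in>BI. is_LABEL TT \<sigma> (blk a1 a2 a3 k) (lamB k) (mB k)) \<and>
     \<comment> \<open>Step 2: offset labels g i t of cell t in block number i\<close>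
     (let off = (\<lambda>j i. \<Sum>i'<i. mB (ord i') j);
          g = (\<lambda>i t. if lamB (ord i) t = 0 then 0 else lamB (ord i) t + off (odd_count t) i);
          \<comment> \<open>Step 3: labels received by the same active j-cell in different blocks\<close>
          U = (\<lambda>j. {(g i t, g i' t) | i i' t. i < K \<and> i' < K \<and>
                   t \<in> blk a1 a2 a3 (ord i) \<and> t \<in> blk a1 a2 a3 (ord i') \<and> odd_count t = j \<and>
                   lamB (ord i) t \<noteq> 0 \<and> lamB (ord i') t \<noteq> 0})
      in
      (\<forall>j\<in>{1,2}. (\<forall>l l'. rep j l = rep j l' \<longleftrightarrow> (l, l') \<in> (U j)\<^sup>*) \<and>
                  (\<forall>l. (l, rep j l) \<in> (U j)\<^sup>*)) \<and>
      (\<forall>t. t \<notin> TT \<longrightarrow> lab t = 0) \<and>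
      (\<forall>t\<in>TT. odd_count t = 3 \<longrightarrow> lab t = \<sigma> (voxel_of t)) \<and>
      (\<forall>t\<in>TT. odd_count t = 0 \<longrightarrow>
          (\<exists>i<K. t \<in> blk a1 a2 a3 (ord i) \<and> lab t = g i t)) \<and>
      (\<forall>t\<in>TT. odd_count t \<in> {1,2} \<longrightarrow>
          (\<exists>i<K. t \<in> blk a1 a2 a3 (ord i) \<and> lab t = rep (odd_count t) (g i t)))) \<and>
     \<comment> \<open>Step 4: 0-cells processed one after the other in an arbitrary order\<close>
     distinct ts \<and> set ts = {t \<in> TT. odd_count t = 0} \<and>
     cs 0 = lab \<and>
     (\<forall>i < length ts. step4_at TT (cs i) (cs (Suc i)) (ts ! i)) \<and>
     \<tau>' = cs (length ts))"

end

theory Submission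
  imports Defs
begin

(*
  If \<tau> t \<noteq> 0 for a 0-cell t, some 1-cell e around t carries a \<tau>-label occurring only once
  around t. Any output of LABEL on a box refines \<tau> on 1- and 2-cells and has the same active
  cells there: a 2-cell is active iff its two voxels differ, and the activity of a 1-cell only
  depends on the equality pattern of the labels of its four 2-cells, which every output of LABEL
  reproduces through the sets \<theta> of these 2-cells. Hence e keeps a unique label around t in the
  block of t, t is active there, and it gets a nonzero label after Steps 2 and 3, whose merges
  still refine \<tau>. In Step 4 two 1-cell labels are merged only if their 1-cells bound the same set
  of 2-cell labels. Around an active 1-cell all nonzero 2-cell labels occur exactly once, because
  the sets \<theta> of its four 2-cells are the pairs ab, cd, ac, bd of its four voxel labels; so such
  a merge only joins 1-cells with equal \<tau>-labels. Consequently the label of e is never merged,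
  it stays unique around t, and t stays active.
*)

section \<open>Geometry of the topological grid\<close>

lemma odd_count_triple:
  "odd_count (x, y, z) = (if odd x then 1 else 0) + (if odd y then 1 else 0) + (if odd z then 1 else 0)"
  by (simp add: odd_count_def)

lemma mem_Tgrid:
  "(x, y, z) \<in> Tgrid n1 n2 n3 \<longleftrightarrow> x \<in> {1..2 * n1 - 1} \<and> y \<in> {1..2 * n2 - 1} \<and> z \<in> {1..2 * n3 - 1}"
  by (simp add: Tgrid_def)

lemma even_between_odd:
  fixes x l h :: nat
  assumes "odd l" "odd h" "x \<in> {l..h}" "even x"
  shows "x + 1 \<in> {l..h} \<and> x - 1 \<in> {l..h}"
  using assms by auto presburger+

lemma odd_upper_bound: "x \<in> {1..2 * n - 1} \<Longrightarrow> odd (2 * n - 1)" for x n :: nat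
  by auto

lemma Gamma_memD: "s \<in> Gamma TT t \<Longrightarrow> s \<in> TT \<and> odd_count s = Suc (odd_count t)"
  by (simp add: Gamma_def)

lemma Gamma_Tgrid:
  assumes "(x, y, z) \<in> Tgrid n1 n2 n3"
  shows "Gamma (Tgrid n1 n2 n3) (x, y, z) =
     (if even x then {(x + 1, y, z), (x - 1, y, z)} else {}) \<union>
     (if even y then {(x, y + 1, z), (x, y - 1, z)} else {}) \<union>
     (if even z then {(x, y, z + 1), (x, y, z - 1)} else {})" (is "?G = ?R")
proof
  show "?G \<subseteq> ?R"
  proof
    fix s assume s: "s \<in> ?G"
    obtain x' y' z' where s_eq: "s = (x', y', z')" by (cases s)
    from s have nbr: "six_nbr (x, y, z) s" and up: "odd_count s = Suc (odd_count (x, y, z))"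
      by (auto simp: Gamma_def)
    consider "nbr1 x x'" "y' = y" "z' = z" | "nbr1 y y'" "x' = x" "z' = z" | "nbr1 z z'" "x' = x" "y' = y"
      using nbr unfolding s_eq six_nbr_def by auto
    then show "s \<in> ?R"
      using up unfolding s_eq by cases (auto simp: nbr1_def odd_count_triple split: if_splits)
  qed
next
  show "?R \<subseteq> ?G"
    using assms even_between_odd[of 1 "2 * n1 - 1" x] even_between_odd[of 1 "2 * n2 - 1" y]
      even_between_odd[of 1 "2 * n3 - 1" z] odd_upper_bound[of x n1] odd_upper_bound[of y n2]
      odd_upper_bound[of z n3]
    by (auto simp: Gamma_def six_nbr_def nbr1_def odd_count_triple mem_Tgrid)
qed

lemma Gamma_Tgrid_subset_odd_box:
  assumes box: "{l1..h1} \<times> {l2..h2} \<times> {l3..h3} \<subseteq> Tgrid n1 n2 n3"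
    and odd: "odd l1" "odd h1" "odd l2" "odd h2" "odd l3" "odd h3"
    and s: "s \<in> {l1..h1} \<times> {l2..h2} \<times> {l3..h3}"
  shows "Gamma (Tgrid n1 n2 n3) s \<subseteq> {l1..h1} \<times> {l2..h2} \<times> {l3..h3}"
proof -
  obtain x y z where s_eq: "s = (x, y, z)" by (cases s)
  have "(x, y, z) \<in> Tgrid n1 n2 n3"
    using s box unfolding s_eq by blast
  then show ?thesis
    using s even_between_odd[of l1 h1 x] even_between_odd[of l2 h2 y] even_between_odd[of l3 h3 z] odd
    unfolding s_eq Gamma_Tgrid[OF \<open>(x, y, z) \<in> Tgrid n1 n2 n3\<close>] by auto
qed

lemma one_cell_square:
  assumes e: "e \<in> Tgrid n1 n2 n3" "odd_count e = 1"
  obtains s1 s2 s3 s4 ua ub uc ud where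
    "Gamma (Tgrid n1 n2 n3) e = {s1, s2, s3, s4}" "distinct [s1, s2, s3, s4]"
    "Gamma (Tgrid n1 n2 n3) s1 = {ua, ub}" "Gamma (Tgrid n1 n2 n3) s2 = {uc, ud}"
    "Gamma (Tgrid n1 n2 n3) s3 = {ua, uc}" "Gamma (Tgrid n1 n2 n3) s4 = {ub, ud}"
    "ua \<noteq> ub" "uc \<noteq> ud" "ua \<noteq> uc" "ub \<noteq> ud"
proof -
  obtain x y z where e_eq: "e = (x, y, z)" by (cases e)
  have x: "x \<in> {1..2 * n1 - 1}" and y: "y \<in> {1..2 * n2 - 1}" and z: "z \<in> {1..2 * n3 - 1}"
    using e(1) by (simp_all add: e_eq mem_Tgrid)
  note nbrs = even_between_odd[OF _ odd_upper_bound[OF x] x] even_between_odd[OF _ odd_upper_bound[OF y] y]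
    even_between_odd[OF _ odd_upper_bound[OF z] z]
  consider "odd x" "even y" "even z" | "even x" "odd y" "even z" | "even x" "even y" "odd z"
    using e(2) by (auto simp: e_eq odd_count_triple split: if_splits)
  then show thesis
  proof cases
    case 1
    show thesis
      by (rule that[of "(x, y + 1, z)" "(x, y - 1, z)" "(x, y, z + 1)" "(x, y, z - 1)"
          "(x, y + 1, z + 1)" "(x, y + 1, z - 1)" "(x, y - 1, z + 1)" "(x, y - 1, z - 1)"])
        (use 1 x y z nbrs in \<open>auto simp: e_eq Gamma_Tgrid mem_Tgrid\<close>)
  next
    case 2
    show thesis
      by (rule that[of "(x + 1, y, z)" "(x - 1, y, z)" "(x, y, z + 1)" "(x, y, z - 1)"
          "(x + 1, y, z + 1)" "(x + 1, y, z - 1)" "(x - 1, y, z + 1)" "(x - 1, y, z - 1)"])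
        (use 2 x y z nbrs in \<open>auto simp: e_eq Gamma_Tgrid mem_Tgrid\<close>)
  next
    case 3
    show thesis
      by (rule that[of "(x + 1, y, z)" "(x - 1, y, z)" "(x, y + 1, z)" "(x, y - 1, z)"
          "(x + 1, y + 1, z)" "(x + 1, y - 1, z)" "(x - 1, y + 1, z)" "(x - 1, y - 1, z)"])
        (use 3 x y z nbrs in \<open>auto simp: e_eq Gamma_Tgrid mem_Tgrid\<close>)
  qed
qed

lemma voxel_of_mem_Vgrid:
  assumes "u \<in> Tgrid n1 n2 n3" "odd_count u = 3"
  shows "voxel_of u \<in> Vgrid n1 n2 n3"
proof -
  obtain x y z where u: "u = (x, y, z)" by (cases u)
  have "odd x" "odd y" "odd z"
    using assms(2) unfolding u by (auto simp: odd_count_triple split: if_splits)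
  then show ?thesis
    using assms(1) unfolding u voxel_of_def Vgrid_def by (simp add: mem_Tgrid) presburger
qed

section \<open>Labels occurring exactly once\<close>

text \<open>The set \<open>\<theta>\<close> of a 2-cell whose two voxels carry the labels \<open>a\<close> and \<open>b\<close>.\<close>
definition distinct_pair :: "nat \<Rightarrow> nat \<Rightarrow> nat set" where
  "distinct_pair a b = (if a = b then {} else {a, b})"

lemma distinct_pair_square:
  "distinct_pair a b = distinct_pair c d \<Longrightarrow> distinct_pair a b \<noteq> {} \<Longrightarrow> distinct_pair a c = distinct_pair b d"
  "distinct_pair a b = distinct_pair a c \<Longrightarrow> distinct_pair a b \<noteq> {} \<Longrightarrow> distinct_pair c d = distinct_pair b d"
  "distinct_pair a b = distinct_pair b d \<Longrightarrow> distinct_pair a b \<noteq> {} \<Longrightarrow> distinct_pair c d = distinct_pair a c"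
  "distinct_pair c d = distinct_pair a c \<Longrightarrow> distinct_pair c d \<noteq> {} \<Longrightarrow> distinct_pair a b = distinct_pair b d"
  "distinct_pair c d = distinct_pair b d \<Longrightarrow> distinct_pair c d \<noteq> {} \<Longrightarrow> distinct_pair a b = distinct_pair a c"
  "distinct_pair a c = distinct_pair b d \<Longrightarrow> distinct_pair a c \<noteq> {} \<Longrightarrow> distinct_pair a b = distinct_pair c d"
  by (auto simp: distinct_pair_def doubleton_eq_iff split: if_splits)

lemma count_list_four_eq_1:
  "count_list [k1, k2, k3, k4] v = 1 \<longleftrightarrow>
    v = k1 \<and> k1 \<noteq> k2 \<and> k1 \<noteq> k3 \<and> k1 \<noteq> k4 \<or> v = k2 \<and> k2 \<noteq> k1 \<and> k2 \<noteq> k3 \<and> k2 \<noteq> k4 \<or>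
    v = k3 \<and> k3 \<noteq> k1 \<and> k3 \<noteq> k2 \<and> k3 \<noteq> k4 \<or> v = k4 \<and> k4 \<noteq> k1 \<and> k4 \<noteq> k2 \<and> k4 \<noteq> k3"
  by (cases "v = k1"; cases "v = k2"; cases "v = k3"; cases "v = k4") auto

lemma count_list_four_unique:
  assumes "k1 = k2 \<Longrightarrow> k1 \<noteq> z \<Longrightarrow> k3 = k4" "k1 = k3 \<Longrightarrow> k1 \<noteq> z \<Longrightarrow> k2 = k4"
    "k1 = k4 \<Longrightarrow> k1 \<noteq> z \<Longrightarrow> k2 = k3" "k2 = k3 \<Longrightarrow> k2 \<noteq> z \<Longrightarrow> k1 = k4"
    "k2 = k4 \<Longrightarrow> k2 \<noteq> z \<Longrightarrow> k1 = k3" "k3 = k4 \<Longrightarrow> k3 \<noteq> z \<Longrightarrow> k1 = k2"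
    and "count_list [k1, k2, k3, k4] u = 1" "u \<noteq> z"
    and "v \<in> set [k1, k2, k3, k4]" "v \<noteq> z"
  shows "count_list [k1, k2, k3, k4] v = 1"
proof -
  have "k1 \<noteq> z \<and> k1 \<noteq> k2 \<and> k1 \<noteq> k3 \<and> k1 \<noteq> k4 \<or> k2 \<noteq> z \<and> k2 \<noteq> k1 \<and> k2 \<noteq> k3 \<and> k2 \<noteq> k4 \<or>
      k3 \<noteq> z \<and> k3 \<noteq> k1 \<and> k3 \<noteq> k2 \<and> k3 \<noteq> k4 \<or> k4 \<noteq> z \<and> k4 \<noteq> k1 \<and> k4 \<noteq> k2 \<and> k4 \<noteq> k3"
    using assms(7,8) unfolding count_list_four_eq_1 by blast
  then have "(k1 \<noteq> z \<longrightarrow> k1 \<noteq> k2 \<and> k1 \<noteq> k3 \<and> k1 \<noteq> k4) \<and> (k2 \<noteq> z \<longrightarrow> k2 \<noteq> k3 \<and> k2 \<noteq> k4) \<and>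
      (k3 \<noteq> z \<longrightarrow> k3 \<noteq> k4)"
    using assms(1-6) by metis
  then show ?thesis
    using assms(9,10) unfolding count_list_four_eq_1 by auto
qed

text \<open>Around a 1-cell the sets \<open>\<theta>\<close> of the four 2-cells are these pairs of its four voxel labels:
  as soon as one nonempty pair occurs only once, every nonempty pair does.\<close>
lemma square_count_unique:
  fixes a b c d :: nat
  defines "ks \<equiv> [distinct_pair a b, distinct_pair c d, distinct_pair a c, distinct_pair b d]"
  assumes "count_list ks u = 1" "u \<noteq> {}" "v \<in> set ks" "v \<noteq> {}"
  shows "count_list ks v = 1"
  using count_list_four_unique[OF distinct_pair_square] assms by simp

lemma card_level_set_eq_count_list:
  "distinct xs \<Longrightarrow> card {x \<in> set xs. f x = v} = count_list (map f xs) v"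
  by (simp add: count_list_eq_length_filter filter_map comp_def distinct_length_filter Int_def eq_commute conj_commute)

lemma theta_cong:
  assumes "\<And>s. s \<in> Gamma TT t \<Longrightarrow> f s = g s"
  shows "theta TT f t = theta TT g t"
proof -
  have "{s \<in> Gamma TT t. f s = l} = {s \<in> Gamma TT t. g s = l}" for l
    using assms by auto
  then show ?thesis
    by (simp add: theta_def)
qed

lemma mem_theta_iff:
  assumes "s \<in> Gamma TT t"
  shows "f s \<in> theta TT f t \<longleftrightarrow> 0 < f s \<and> (\<forall>s'\<in>Gamma TT t. f s' = f s \<longrightarrow> s' = s)"
proof -
  let ?A = "{s' \<in> Gamma TT t. f s' = f s}"
  have "s \<in> ?A"
    using assms by simp
  have "card ?A = 1 \<longleftrightarrow> ?A = {s}"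
  proof
    assume "card ?A = 1"
    then obtain x where "?A = {x}"
      by (rule card_1_singletonE)
    then show "?A = {s}"
      using \<open>s \<in> ?A\<close> by simp
  qed simp
  also have "\<dots> \<longleftrightarrow> (\<forall>s'\<in>Gamma TT t. f s' = f s \<longrightarrow> s' = s)"
    using \<open>s \<in> ?A\<close> by blast
  finally show ?thesis
    by (simp add: theta_def)
qed

lemma theta_subset_image: "theta TT f t \<subseteq> f ` Gamma TT t - {0}"
proof
  fix l assume "l \<in> theta TT f t"
  then have "0 < l" and card: "card {s \<in> Gamma TT t. f s = l} = 1"
    by (auto simp: theta_def)
  obtain s where "{s \<in> Gamma TT t. f s = l} = {s}"
    using card by (rule card_1_singletonE)
  then have "s \<in> Gamma TT t" "f s = l"
    by (metis (mono_tags, lifting) mem_Collect_eq singletonI)+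
  then show "l \<in> f ` Gamma TT t - {0}"
    using \<open>0 < l\<close> by force
qed

lemma theta_two_cells:
  assumes "Gamma TT s = {u, v}" "u \<noteq> v" "0 < f u" "0 < f v"
  shows "theta TT f s = distinct_pair (f u) (f v)"
proof -
  have "{w \<in> {u, v}. f w = l} = (if f u = l then {u} else {}) \<union> (if f v = l then {v} else {})" for l
    by auto
  then have card: "card {w \<in> {u, v}. f w = l} = 1 \<longleftrightarrow> (f u = l) \<noteq> (f v = l)" for l
    using assms(2) by (cases "f u = l"; cases "f v = l") simp_all
  have "l \<in> theta TT f s \<longleftrightarrow> l \<in> distinct_pair (f u) (f v)" for l
    unfolding theta_def assms(1) mem_Collect_eq card using assms(3,4)
    by (auto simp: distinct_pair_def)
  then show ?thesis
    by blast
qed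

definition relabelling_on :: "'a set \<Rightarrow> ('a \<Rightarrow> nat) \<Rightarrow> ('a \<Rightarrow> nat) \<Rightarrow> bool" where
  "relabelling_on S f g \<longleftrightarrow>
     (\<forall>s\<in>S. \<forall>s'\<in>S. f s' = f s \<longleftrightarrow> g s' = g s) \<and> (\<forall>s\<in>S. f s = 0 \<longleftrightarrow> g s = 0)"

lemma theta_relabelling:
  assumes "relabelling_on (Gamma TT t) f g" "s \<in> Gamma TT t"
  shows "f s \<in> theta TT f t \<longleftrightarrow> g s \<in> theta TT g t"
proof -
  have eq: "f s' = f s \<longleftrightarrow> g s' = g s" if "s' \<in> Gamma TT t" for s'
    using assms that unfolding relabelling_on_def by blast
  have "f s = 0 \<longleftrightarrow> g s = 0"
    using assms unfolding relabelling_on_def by blast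
  then have "0 < f s \<longleftrightarrow> 0 < g s"
    by (metis neq0_conv)
  moreover have "(\<forall>s'\<in>Gamma TT t. f s' = f s \<longrightarrow> s' = s) \<longleftrightarrow> (\<forall>s'\<in>Gamma TT t. g s' = g s \<longrightarrow> s' = s)"
    using eq by blast
  ultimately show ?thesis
    unfolding mem_theta_iff[OF assms(2)] by (simp only:)
qed

lemma theta_relabelling_empty:
  assumes "relabelling_on (Gamma TT t) f g"
  shows "theta TT f t = {} \<longleftrightarrow> theta TT g t = {}"
proof -
  have "theta TT f t \<noteq> {}" if fg: "relabelling_on (Gamma TT t) f g" and g: "theta TT g t \<noteq> {}" for f g
  proof -
    obtain s where "s \<in> Gamma TT t" "g s \<in> theta TT g t"
      using g theta_subset_image by fastforce
    then show ?thesis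
      using theta_relabelling[OF fg] by blast
  qed
  moreover have "relabelling_on (Gamma TT t) g f"
    using assms unfolding relabelling_on_def by blast
  ultimately show ?thesis
    using assms by blast
qed

lemma rtrancl_positive_zero_iff:
  fixes R :: "nat rel"
  assumes "\<And>a b. (a, b) \<in> R \<Longrightarrow> 0 < a \<and> 0 < b" "(x, y) \<in> R\<^sup>*"
  shows "x = 0 \<longleftrightarrow> y = 0"
  using assms(2) by (induction rule: rtrancl_induct) (auto dest: assms(1))

lemma nonzero_image_transfer:
  assumes "\<forall>s\<in>A. f s = 0 \<longleftrightarrow> g s = 0" "\<forall>s\<in>A. \<forall>s'\<in>A'. f s' = f s \<longrightarrow> g s' = g s"
    "f ` A - {0} \<subseteq> f ` A' - {0}"
  shows "g ` A - {0} \<subseteq> g ` A' - {0}"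
proof
  fix l assume "l \<in> g ` A - {0}"
  then obtain s where s: "s \<in> A" "g s = l" "l \<noteq> 0"
    by auto
  then have "f s \<in> f ` A' - {0}"
    using assms(1,3) by auto
  then obtain s' where s': "s' \<in> A'" "f s = f s'"
    by auto
  then have "g s' = l"
    using assms(2) s by simp
  then show "l \<in> g ` A' - {0}"
    using s' s(3) by auto
qed

section \<open>LABEL on a box\<close>

locale voxel_grid =
  fixes n1 n2 n3 :: nat and \<sigma> :: "cell \<Rightarrow> nat"
  assumes voxel_labels_pos: "\<forall>r\<in>Vgrid n1 n2 n3. 0 < \<sigma> r"
begin

abbreviation T :: "cell set" where
  "T \<equiv> Tgrid n1 n2 n3"

definition LABEL_box :: "cell set \<Rightarrow> (cell \<Rightarrow> nat) \<Rightarrow> (nat \<Rightarrow> nat) \<Rightarrow> bool" where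
  "LABEL_box B lam m \<longleftrightarrow> is_LABEL T \<sigma> B lam m \<and> B \<subseteq> T \<and> (\<forall>t\<in>B. Gamma T t \<subseteq> B)"

lemma LABEL_box_Tgrid: "LABEL_box T lam m \<longleftrightarrow> is_LABEL T \<sigma> T lam m"
  unfolding LABEL_box_def Gamma_def by simp

lemma voxel_label_pos: "u \<in> T \<Longrightarrow> odd_count u = 3 \<Longrightarrow> 0 < \<sigma> (voxel_of u)"
  using voxel_labels_pos voxel_of_mem_Vgrid by blast

lemma LABEL_boxD:
  assumes "LABEL_box B lam m"
  shows "B \<subseteq> T" and "\<forall>t\<in>B. Gamma T t \<subseteq> B"
    and "\<forall>t\<in>B. odd_count t = 3 \<longrightarrow> lam t = \<sigma> (voxel_of t)"
    and "\<forall>j<3. \<forall>t\<in>B. odd_count t = j \<longrightarrow> (lam t = 0 \<longleftrightarrow> theta T lam t = {})"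
    and "\<forall>j<3. lam ` {t \<in> B. odd_count t = j \<and> theta T lam t \<noteq> {}} = {1..m j}"
    and "\<forall>j<3. \<forall>t1\<in>B. \<forall>t2\<in>B. odd_count t1 = j \<longrightarrow> odd_count t2 = j \<longrightarrow>
           theta T lam t1 \<noteq> {} \<longrightarrow> theta T lam t2 \<noteq> {} \<longrightarrow>
           (lam t1 = lam t2 \<longleftrightarrow> (t1, t2) \<in> (cls_rel T B lam j)\<^sup>*)"
proof -
  from assms have L: "is_LABEL T \<sigma> B lam m" and "B \<subseteq> T" and "\<forall>t\<in>B. Gamma T t \<subseteq> B"
    unfolding LABEL_box_def by blast+
  then show "B \<subseteq> T" and "\<forall>t\<in>B. Gamma T t \<subseteq> B"
    by (simp_all only:)
  note C = L[unfolded is_LABEL_def]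
  from C show "\<forall>t\<in>B. odd_count t = 3 \<longrightarrow> lam t = \<sigma> (voxel_of t)"
    by (elim conjE)
  from C show "\<forall>j<3. \<forall>t\<in>B. odd_count t = j \<longrightarrow> (lam t = 0 \<longleftrightarrow> theta T lam t = {})"
    by (elim conjE)
  from C show "\<forall>j<3. lam ` {t \<in> B. odd_count t = j \<and> theta T lam t \<noteq> {}} = {1..m j}"
    by (elim conjE)
  from C show "\<forall>j<3. \<forall>t1\<in>B. \<forall>t2\<in>B. odd_count t1 = j \<longrightarrow> odd_count t2 = j \<longrightarrow>
      theta T lam t1 \<noteq> {} \<longrightarrow> theta T lam t2 \<noteq> {} \<longrightarrow>
      (lam t1 = lam t2 \<longleftrightarrow> (t1, t2) \<in> (cls_rel T B lam j)\<^sup>*)"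
    by (elim conjE)
qed

context
  fixes B :: "cell set" and lam :: "cell \<Rightarrow> nat" and m :: "nat \<Rightarrow> nat"
  assumes box: "LABEL_box B lam m"
begin

lemma LABEL_box_subset: "B \<subseteq> T"
  using LABEL_boxD(1)[OF box] .

lemma LABEL_box_Gamma_subset: "t \<in> B \<Longrightarrow> Gamma T t \<subseteq> B"
  using LABEL_boxD(2)[OF box] by blast

lemma LABEL_box_Gamma_mem: "t \<in> B \<Longrightarrow> s \<in> Gamma T t \<Longrightarrow> s \<in> B \<and> odd_count s = Suc (odd_count t)"
  using LABEL_box_Gamma_subset Gamma_memD by blast

lemma LABEL_box_3cell: "t \<in> B \<Longrightarrow> odd_count t = 3 \<Longrightarrow> lam t = \<sigma> (voxel_of t)"
  using LABEL_boxD(3)[OF box] by blast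

lemma LABEL_box_zero_iff: "t \<in> B \<Longrightarrow> odd_count t < 3 \<Longrightarrow> lam t = 0 \<longleftrightarrow> theta T lam t = {}"
  using LABEL_boxD(4)[OF box] by blast

lemma LABEL_box_range: "j < 3 \<Longrightarrow> lam ` {t \<in> B. odd_count t = j \<and> theta T lam t \<noteq> {}} = {1..m j}"
  using LABEL_boxD(5)[OF box] by blast

lemma LABEL_box_eq_iff_class:
  assumes "t \<in> B" "t' \<in> B" "odd_count t = j" "odd_count t' = j" "j < 3"
    "theta T lam t \<noteq> {}" "theta T lam t' \<noteq> {}"
  shows "lam t = lam t' \<longleftrightarrow> (t, t') \<in> (cls_rel T B lam j)\<^sup>*"
  using LABEL_boxD(6)[OF box] assms by blast

lemma LABEL_box_theta_eq:
  assumes "t \<in> B" "t' \<in> B" "odd_count t = j" "odd_count t' = j" "j < 3" "lam t \<noteq> 0" "lam t = lam t'"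
  shows "theta T lam t = theta T lam t'"
proof -
  have "theta T lam t \<noteq> {}" "theta T lam t' \<noteq> {}"
    using LABEL_box_zero_iff[OF assms(1)] LABEL_box_zero_iff[OF assms(2)] assms(3-7) by simp_all
  then have "(t, t') \<in> (cls_rel T B lam j)\<^sup>*"
    using LABEL_box_eq_iff_class assms by blast
  then show ?thesis
    by (induction rule: rtrancl_induct) (auto simp: cls_rel_def)
qed

lemma LABEL_box_eq_if_theta_eq:
  assumes "t \<in> B" "t' \<in> B" "odd_count t = j" "odd_count t' = j" "j < 3"
    "theta T lam t \<noteq> {}" "theta T lam t = theta T lam t'" "connected_cells T t t'"
  shows "lam t = lam t'"
proof -
  have "(t, t') \<in> cls_rel T B lam j"
    using assms unfolding cls_rel_def by blast
  then show ?thesis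
    using LABEL_box_eq_iff_class assms by (metis r_into_rtrancl)
qed

lemma LABEL_box_theta_2cell:
  assumes "s \<in> B" "odd_count s = 2"
  shows "theta T lam s = theta T (\<sigma> \<circ> voxel_of) s"
proof (rule theta_cong)
  fix u assume u: "u \<in> Gamma T s"
  then have "u \<in> B"
    using assms(1) LABEL_box_Gamma_subset by blast
  moreover have "odd_count u = 3"
    using Gamma_memD[OF u] assms(2) by simp
  ultimately show "lam u = (\<sigma> \<circ> voxel_of) u"
    using LABEL_box_3cell by simp
qed

lemma LABEL_box_2cells_around_1cell:
  assumes e: "e \<in> B" "odd_count e = 1" and s: "s \<in> Gamma T e" "s' \<in> Gamma T e"
  shows "lam s' = lam s \<longleftrightarrow> theta T (\<sigma> \<circ> voxel_of) s' = theta T (\<sigma> \<circ> voxel_of) s"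
proof -
  have in_B: "s \<in> B" "s' \<in> B" and dim: "odd_count s = 2" "odd_count s' = 2"
    using LABEL_box_Gamma_mem[OF e(1) s(1)] LABEL_box_Gamma_mem[OF e(1) s(2)] e(2) by simp_all
  note theta_vox = LABEL_box_theta_2cell[OF in_B(1) dim(1)] LABEL_box_theta_2cell[OF in_B(2) dim(2)]
  have zero: "lam s = 0 \<longleftrightarrow> theta T (\<sigma> \<circ> voxel_of) s = {}" "lam s' = 0 \<longleftrightarrow> theta T (\<sigma> \<circ> voxel_of) s' = {}"
    using LABEL_box_zero_iff in_B dim theta_vox by auto
  have "connected_cells T s' s"
    using s e LABEL_box_subset unfolding connected_cells_def by blast
  then show ?thesis
    using LABEL_box_theta_eq[OF in_B(2,1) dim(2,1)] LABEL_box_eq_if_theta_eq[OF in_B(2,1) dim(2,1)]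
      zero theta_vox by (cases "lam s = 0") auto
qed

lemma LABEL_box_active_1cell_labels_unique:
  assumes e: "e \<in> B" "odd_count e = 1" "theta T lam e \<noteq> {}" and s: "s \<in> Gamma T e" "lam s \<noteq> 0"
  shows "lam s \<in> theta T lam e"
proof -
  let ?K = "theta T (\<sigma> \<circ> voxel_of)"
  have "e \<in> T"
    using e LABEL_box_subset by blast
  then obtain s1 s2 s3 s4 ua ub uc ud where
    G: "Gamma T e = {s1, s2, s3, s4}" "distinct [s1, s2, s3, s4]"
      "Gamma T s1 = {ua, ub}" "Gamma T s2 = {uc, ud}" "Gamma T s3 = {ua, uc}" "Gamma T s4 = {ub, ud}"
      "ua \<noteq> ub" "uc \<noteq> ud" "ua \<noteq> uc" "ub \<noteq> ud"
    using e(2) by (rule one_cell_square)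
  have "0 < (\<sigma> \<circ> voxel_of) u" if u_voxel: "u \<in> {ua, ub, uc, ud}" for u
  proof -
    have "s1 \<in> Gamma T e" "s2 \<in> Gamma T e" "u \<in> Gamma T s1 \<or> u \<in> Gamma T s2"
      using u_voxel G by auto
    then obtain s' where s': "s' \<in> Gamma T e" and u: "u \<in> Gamma T s'"
      by blast
    have "odd_count s' = 2"
      using Gamma_memD[OF s'] e(2) by simp
    then show ?thesis
      using Gamma_memD[OF u] voxel_label_pos by simp
  qed
  then have K: "map ?K [s1, s2, s3, s4] =
      [distinct_pair (\<sigma> (voxel_of ua)) (\<sigma> (voxel_of ub)), distinct_pair (\<sigma> (voxel_of uc)) (\<sigma> (voxel_of ud)),
       distinct_pair (\<sigma> (voxel_of ua)) (\<sigma> (voxel_of uc)), distinct_pair (\<sigma> (voxel_of ub)) (\<sigma> (voxel_of ud))]"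
    using G by (simp add: theta_two_cells)
  have card: "card {s' \<in> Gamma T e. lam s' = lam x} = count_list (map ?K [s1, s2, s3, s4]) (?K x)"
    if "x \<in> Gamma T e" for x
  proof -
    have "{s' \<in> Gamma T e. lam s' = lam x} = {s' \<in> set [s1, s2, s3, s4]. ?K s' = ?K x}"
      using LABEL_box_2cells_around_1cell[OF e(1,2) that] G(1) by auto
    then show ?thesis
      by (simp only: card_level_set_eq_count_list[OF G(2)])
  qed
  have zero: "lam x = 0 \<longleftrightarrow> ?K x = {}" if "x \<in> Gamma T e" for x
  proof -
    have "x \<in> B" "odd_count x = 2"
      using LABEL_box_Gamma_mem[OF e(1) that] e(2) by simp_all
    then show ?thesis
      using LABEL_box_zero_iff LABEL_box_theta_2cell by simp
  qed
  have mem_theta: "lam x \<in> theta T lam e \<longleftrightarrow> 0 < lam x \<and> card {s' \<in> Gamma T e. lam s' = lam x} = 1" for x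
    by (simp add: theta_def)
  obtain u where u: "u \<in> Gamma T e" "lam u \<in> theta T lam e"
    using e(3) theta_subset_image by fastforce
  then have "count_list (map ?K [s1, s2, s3, s4]) (?K u) = 1" "?K u \<noteq> {}"
    using card[OF u(1)] zero[OF u(1)] mem_theta by simp_all
  moreover have "?K s \<in> set (map ?K [s1, s2, s3, s4])" "?K s \<noteq> {}"
    using s G(1) zero by auto
  ultimately have "count_list (map ?K [s1, s2, s3, s4]) (?K s) = 1"
    unfolding K by (rule square_count_unique)
  then show ?thesis
    using card[OF s(1)] s(2) mem_theta by simp
qed

lemma LABEL_box_theta_active_1cell:
  assumes "e \<in> B" "odd_count e = 1" "theta T lam e \<noteq> {}"
  shows "theta T lam e = lam ` Gamma T e - {0}"
  using theta_subset_image LABEL_box_active_1cell_labels_unique[OF assms] by blast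

end

end

section \<open>Block labels versus the global labelling\<close>

locale global_labelling = voxel_grid +
  fixes \<tau> :: "cell \<Rightarrow> nat" and mT :: "nat \<Rightarrow> nat"
  assumes global_LABEL: "LABEL_box T \<tau> mT"
begin

lemma global_eq_if_2cell_labels_eq:
  assumes "x \<in> T" "y \<in> T" "odd_count x = 1" "odd_count y = 1" "\<tau> x \<noteq> 0" "\<tau> y \<noteq> 0"
    "connected_cells T x y" "\<tau> ` Gamma T x - {0} = \<tau> ` Gamma T y - {0}"
  shows "\<tau> x = \<tau> y"
proof -
  have "theta T \<tau> x \<noteq> {}" "theta T \<tau> y \<noteq> {}"
    using assms LABEL_box_zero_iff[OF global_LABEL] by auto
  then have "theta T \<tau> x = theta T \<tau> y"
    using assms LABEL_box_theta_active_1cell[OF global_LABEL] by simp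
  then show ?thesis
    using assms \<open>theta T \<tau> x \<noteq> {}\<close> LABEL_box_eq_if_theta_eq[OF global_LABEL] by simp
qed

context
  fixes B :: "cell set" and lam :: "cell \<Rightarrow> nat" and m :: "nat \<Rightarrow> nat"
  assumes box: "LABEL_box B lam m"
begin

lemma block_zero_iff_global_2cell:
  assumes "s \<in> B" "odd_count s = 2"
  shows "lam s = 0 \<longleftrightarrow> \<tau> s = 0"
proof -
  have "s \<in> T"
    using assms LABEL_box_subset[OF box] by blast
  then show ?thesis
    using assms LABEL_box_zero_iff[OF box] LABEL_box_zero_iff[OF global_LABEL]
      LABEL_box_theta_2cell[OF box] LABEL_box_theta_2cell[OF global_LABEL] by simp
qed

lemma block_relabelling_around_1cell:
  assumes "e \<in> B" "odd_count e = 1"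
  shows "relabelling_on (Gamma T e) lam \<tau>"
proof -
  have "e \<in> T"
    using assms LABEL_box_subset[OF box] by blast
  moreover have "s \<in> B" "odd_count s = 2" if "s \<in> Gamma T e" for s
    using LABEL_box_Gamma_mem[OF box assms(1) that] assms(2) by simp_all
  ultimately show ?thesis
    unfolding relabelling_on_def
    using assms LABEL_box_2cells_around_1cell[OF box] LABEL_box_2cells_around_1cell[OF global_LABEL]
      block_zero_iff_global_2cell by auto
qed

lemma block_zero_iff_global:
  assumes "t \<in> B" "odd_count t \<in> {1, 2}"
  shows "lam t = 0 \<longleftrightarrow> \<tau> t = 0"
proof (cases "odd_count t = 2")
  case False
  have "t \<in> T"
    using assms LABEL_box_subset[OF box] by blast
  then show ?thesis
    using False assms LABEL_box_zero_iff[OF box] LABEL_box_zero_iff[OF global_LABEL]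
      theta_relabelling_empty[OF block_relabelling_around_1cell] by simp
qed (use assms block_zero_iff_global_2cell in simp)

lemma global_eq_if_block_eq_by_classes:
  assumes steps: "\<And>x y. (x, y) \<in> cls_rel T B lam j \<Longrightarrow> \<tau> x = \<tau> y"
    and t: "t \<in> B" "t' \<in> B" "odd_count t = j" "odd_count t' = j" "j < 3" "lam t \<noteq> 0" "lam t = lam t'"
  shows "\<tau> t = \<tau> t'"
proof -
  have "theta T lam t \<noteq> {}" "theta T lam t' \<noteq> {}"
    using LABEL_box_zero_iff[OF box t(1)] LABEL_box_zero_iff[OF box t(2)] t(3-7) by simp_all
  then have "(t, t') \<in> (cls_rel T B lam j)\<^sup>*"
    using t LABEL_box_eq_iff_class[OF box] by blast
  then show ?thesis
    by (induction rule: rtrancl_induct) (auto dest: steps)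
qed

lemma global_eq_if_block_eq_2cell:
  assumes "s \<in> B" "s' \<in> B" "odd_count s = 2" "odd_count s' = 2" "lam s \<noteq> 0" "lam s = lam s'"
  shows "\<tau> s = \<tau> s'"
proof (rule global_eq_if_block_eq_by_classes[OF _ assms(1-4) _ assms(5,6)])
  fix x y assume "(x, y) \<in> cls_rel T B lam 2"
  then have B: "x \<in> B" "y \<in> B" and dim: "odd_count x = 2" "odd_count y = 2"
    and act: "theta T lam x \<noteq> {}" and eq: "theta T lam x = theta T lam y"
    and conn: "connected_cells T x y"
    unfolding cls_rel_def by auto
  have T: "x \<in> T" "y \<in> T"
    using B LABEL_box_subset[OF box] by auto
  have "theta T \<tau> x \<noteq> {}" "theta T \<tau> x = theta T \<tau> y"
    using act eq LABEL_box_theta_2cell[OF box B(1) dim(1)] LABEL_box_theta_2cell[OF box B(2) dim(2)]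
      LABEL_box_theta_2cell[OF global_LABEL T(1) dim(1)] LABEL_box_theta_2cell[OF global_LABEL T(2) dim(2)]
    by simp_all
  then show "\<tau> x = \<tau> y"
    using LABEL_box_eq_if_theta_eq[OF global_LABEL T dim] conn by simp
qed simp

lemma global_2cell_labels_subset_if_block:
  assumes "x \<in> B" "y \<in> B" "odd_count x = 1" "odd_count y = 1"
    "lam ` Gamma T x - {0} \<subseteq> lam ` Gamma T y - {0}"
  shows "\<tau> ` Gamma T x - {0} \<subseteq> \<tau> ` Gamma T y - {0}"
proof (rule nonzero_image_transfer[OF _ _ assms(5)])
  have two_cell: "s \<in> B" "odd_count s = 2" if "s \<in> Gamma T x \<or> s \<in> Gamma T y" for s
    using that LABEL_box_Gamma_mem[OF box assms(1), of s] LABEL_box_Gamma_mem[OF box assms(2), of s]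
      assms(3,4) by auto
  then show "\<forall>s\<in>Gamma T x. lam s = 0 \<longleftrightarrow> \<tau> s = 0"
    using block_zero_iff_global_2cell by blast
  show "\<forall>s\<in>Gamma T x. \<forall>s'\<in>Gamma T y. lam s' = lam s \<longrightarrow> \<tau> s' = \<tau> s"
  proof (intro ballI impI)
    fix s s' assume "s \<in> Gamma T x" "s' \<in> Gamma T y" and eq: "lam s' = lam s"
    then have s: "s \<in> B" "odd_count s = 2" and s': "s' \<in> B" "odd_count s' = 2"
      using two_cell by blast+
    show "\<tau> s' = \<tau> s"
    proof (cases "lam s = 0")
      case True
      then show ?thesis
        using eq block_zero_iff_global_2cell[OF s] block_zero_iff_global_2cell[OF s'] by simp
    next
      case False
      then show ?thesis
        using eq global_eq_if_block_eq_2cell[OF s'(1) s(1) s'(2) s(2)] by simp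
    qed
  qed
qed

lemma global_eq_if_block_eq:
  assumes t: "t \<in> B" "t' \<in> B" "odd_count t = j" "odd_count t' = j" "j \<in> {1, 2}"
    and eq: "lam t \<noteq> 0" "lam t = lam t'"
  shows "\<tau> t = \<tau> t'"
proof (cases "j = 2")
  case True
  then show ?thesis
    using global_eq_if_block_eq_2cell[OF t(1,2)] t(3,4) eq by simp
next
  case False
  with t(5) have j: "j = 1"
    by simp
  show ?thesis
  proof (rule global_eq_if_block_eq_by_classes[OF _ t(1-4) _ eq])
    fix x y assume "(x, y) \<in> cls_rel T B lam j"
    then have B: "x \<in> B" "y \<in> B" and dim: "odd_count x = 1" "odd_count y = 1"
      and act: "theta T lam x \<noteq> {}" "theta T lam y \<noteq> {}"
      and theta_eq: "theta T lam x = theta T lam y" and conn: "connected_cells T x y"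
      unfolding cls_rel_def j by auto
    have T: "x \<in> T" "y \<in> T"
      using B LABEL_box_subset[OF box] by auto
    have "lam x \<noteq> 0" "lam y \<noteq> 0"
      using act LABEL_box_zero_iff[OF box B(1)] LABEL_box_zero_iff[OF box B(2)] dim by simp_all
    then have "\<tau> x \<noteq> 0" "\<tau> y \<noteq> 0"
      using block_zero_iff_global[OF B(1)] block_zero_iff_global[OF B(2)] dim by simp_all
    moreover have "lam ` Gamma T x - {0} = lam ` Gamma T y - {0}"
      using theta_eq LABEL_box_theta_active_1cell[OF box B(1) dim(1) act(1)]
        LABEL_box_theta_active_1cell[OF box B(2) dim(2) act(2)] by simp
    then have "\<tau> ` Gamma T x - {0} = \<tau> ` Gamma T y - {0}"
      using global_2cell_labels_subset_if_block[OF B dim] global_2cell_labels_subset_if_block[OF B(2,1) dim(2,1)]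
      by blast
    ultimately show "\<tau> x = \<tau> y"
      using global_eq_if_2cell_labels_eq[OF T dim] conn by simp
  qed (use j in simp)
qed

end

end

section \<open>The block-wise method\<close>

lemma valid_axis_nth:
  assumes "valid_axis n xs" "i < length xs"
  shows "odd (xs ! i) \<and> xs ! i \<in> {1..2 * n - 1}"
proof -
  have ne: "xs \<noteq> []" and sorted: "sorted xs" and odd: "\<forall>x\<in>set xs. odd x"
    and ends: "xs ! 0 = 1" "xs ! (length xs - 1) = 2 * n - 1"
    using assms(1) strict_sorted_imp_sorted unfolding valid_axis_def
    by (auto simp: hd_conv_nth last_conv_nth)
  have "xs ! 0 \<le> xs ! i" "xs ! i \<le> xs ! (length xs - 1)"
    using sorted_nth_mono[OF sorted] assms(2) by auto
  then show ?thesis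
    using ends odd assms(2) by auto
qed

locale blockwise_run = global_labelling +
  fixes a1 a2 a3 :: "nat list" and K :: nat and ord :: "nat \<Rightarrow> cell"
    and lamB :: "cell \<Rightarrow> cell \<Rightarrow> nat" and mB :: "cell \<Rightarrow> nat \<Rightarrow> nat"
    and off :: "nat \<Rightarrow> nat \<Rightarrow> nat" and g :: "nat \<Rightarrow> cell \<Rightarrow> nat" and U :: "nat \<Rightarrow> nat rel"
    and rep :: "nat \<Rightarrow> nat \<Rightarrow> nat" and lab :: "cell \<Rightarrow> nat"
  assumes axes: "valid_axis n1 a1" "valid_axis n2 a2" "valid_axis n3 a3"
    and ord_bij: "bij_betw ord {..<K} (block_indices a1 a2 a3)"
    and blocks_LABEL: "\<forall>k\<in>block_indices a1 a2 a3. is_LABEL T \<sigma> (blk a1 a2 a3 k) (lamB k) (mB k)"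
    and off_eq: "off = (\<lambda>j i. \<Sum>i'<i. mB (ord i') j)"
    and g_eq: "g = (\<lambda>i t. if lamB (ord i) t = 0 then 0 else lamB (ord i) t + off (odd_count t) i)"
    and U_eq: "U = (\<lambda>j. {(g i t, g i' t) | i i' t. i < K \<and> i' < K \<and>
                   t \<in> blk a1 a2 a3 (ord i) \<and> t \<in> blk a1 a2 a3 (ord i') \<and> odd_count t = j \<and>
                   lamB (ord i) t \<noteq> 0 \<and> lamB (ord i') t \<noteq> 0})"
    and rep: "\<forall>j\<in>{1, 2}. (\<forall>l l'. rep j l = rep j l' \<longleftrightarrow> (l, l') \<in> (U j)\<^sup>*) \<and> (\<forall>l. (l, rep j l) \<in> (U j)\<^sup>*)"
    and lab_0cells: "\<forall>t\<in>T. odd_count t = 0 \<longrightarrow> (\<exists>i<K. t \<in> blk a1 a2 a3 (ord i) \<and> lab t = g i t)"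
    and lab_12cells: "\<forall>t\<in>T. odd_count t \<in> {1, 2} \<longrightarrow>
      (\<exists>i<K. t \<in> blk a1 a2 a3 (ord i) \<and> lab t = rep (odd_count t) (g i t))"
begin

abbreviation block :: "nat \<Rightarrow> cell set" where
  "block i \<equiv> blk a1 a2 a3 (ord i)"

lemma block_LABEL_box:
  assumes "i < K"
  shows "LABEL_box (block i) (lamB (ord i)) (mB (ord i))"
proof -
  have k: "ord i \<in> block_indices a1 a2 a3"
    using assms ord_bij bij_betwE by blast
  obtain k1 k2 k3 where k_eq: "ord i = (k1, k2, k3)"
    by (cases "ord i")
  have r: "1 \<le> k1" "k1 < length a1" "1 \<le> k2" "k2 < length a2" "1 \<le> k3" "k3 < length a3"
    using k unfolding k_eq block_indices_def by auto
  have axis: "odd (a ! (k - 1)) \<and> a ! (k - 1) \<in> {1..2 * n - 1} \<and> odd (a ! k) \<and> a ! k \<in> {1..2 * n - 1}"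
    if "valid_axis n a" "1 \<le> k" "k < length a" for a n k
    using valid_axis_nth[OF that(1), of "k - 1"] valid_axis_nth[OF that(1), of k] that(2,3) by simp
  note bounds = axis[OF axes(1) r(1,2)] axis[OF axes(2) r(3,4)] axis[OF axes(3) r(5,6)]
  have sub: "block i \<subseteq> T"
    using bounds unfolding blk_def k_eq by (auto simp: Tgrid_def)
  have "Gamma T t \<subseteq> block i" if "t \<in> block i" for t
    using Gamma_Tgrid_subset_odd_box[OF sub[unfolded blk_def k_eq, simplified]] bounds that
    unfolding blk_def k_eq by simp
  then show ?thesis
    using sub blocks_LABEL k unfolding LABEL_box_def by blast
qed

lemma offset_label_zero_iff: "g i t = 0 \<longleftrightarrow> lamB (ord i) t = 0"
  unfolding g_eq by simp

lemma offset_label_bounds: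
  assumes "i < K" "s \<in> block i" "odd_count s = j" "j < 3" "lamB (ord i) s \<noteq> 0"
  shows "off j i < g i s \<and> g i s \<le> off j (Suc i)"
proof -
  note box = block_LABEL_box[OF assms(1)]
  have "theta T (lamB (ord i)) s \<noteq> {}"
    using LABEL_box_zero_iff[OF box assms(2)] assms(3-5) by simp
  then have "lamB (ord i) s \<in> {1..mB (ord i) j}"
    using LABEL_box_range[OF box assms(4)] assms(2,3) by blast
  moreover have "off j (Suc i) = off j i + mB (ord i) j"
    unfolding off_eq by simp
  ultimately show ?thesis
    unfolding g_eq using assms(3,5) by simp
qed

lemma offset_label_same_block:
  assumes s: "i < K" "s \<in> block i" "odd_count s = j" "lamB (ord i) s \<noteq> 0"
    and s': "i' < K" "s' \<in> block i'" "odd_count s' = j" "lamB (ord i') s' \<noteq> 0"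
    and "j < 3" "g i s = g i' s'"
  shows "i = i'"
proof -
  have mono: "off j a \<le> off j b" if "a \<le> b" for a b
    unfolding off_eq using that by (intro sum_mono2) auto
  have "\<not> i < i'" if "i < K" "s \<in> block i" "odd_count s = j" "lamB (ord i) s \<noteq> 0"
    "i' < K" "s' \<in> block i'" "odd_count s' = j" "lamB (ord i') s' \<noteq> 0" "g i s = g i' s'" for i i' s s'
    using offset_label_bounds[of i s j] offset_label_bounds[of i' s' j] mono[of "Suc i" i'] that \<open>j < 3\<close>
    by (metis Suc_leI leD le_less_trans)
  then show ?thesis
    using s s' assms(9,10) by (metis linorder_neqE_nat)
qed

lemma offset_label_global_eq:
  assumes j: "j \<in> {1, 2}"
    and s: "i < K" "s \<in> block i" "odd_count s = j" "lamB (ord i) s \<noteq> 0"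
    and s': "i' < K" "s' \<in> block i'" "odd_count s' = j" "lamB (ord i') s' \<noteq> 0"
    and eq: "g i s = g i' s'"
  shows "\<tau> s = \<tau> s'"
proof -
  have "i = i'"
    using offset_label_same_block[OF s s' _ eq] j by auto
  then have "lamB (ord i) s = lamB (ord i) s'"
    using eq s(3,4) s'(3,4) unfolding g_eq by simp
  then show ?thesis
    using global_eq_if_block_eq[OF block_LABEL_box[OF s(1)] s(2)] s'(2) s(3,4) s'(3) j \<open>i = i'\<close> by simp
qed

lemma merged_label_global_eq:
  assumes chain: "(l, l') \<in> (U j)\<^sup>*" and j: "j \<in> {1, 2}"
    and s: "i < K" "s \<in> block i" "odd_count s = j" "lamB (ord i) s \<noteq> 0" "g i s = l"
  shows "\<And>i' s'. i' < K \<Longrightarrow> s' \<in> block i' \<Longrightarrow> odd_count s' = j \<Longrightarrow> lamB (ord i') s' \<noteq> 0 \<Longrightarrow>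
    g i' s' = l' \<Longrightarrow> \<tau> s = \<tau> s'"
  using chain
proof (induction rule: rtrancl_induct)
  case base
  then show ?case
    using offset_label_global_eq[OF j s(1-4)] s(5) by simp
next
  case (step l1 l2)
  from step.hyps(2) obtain i1 i2 t where t: "l1 = g i1 t" "l2 = g i2 t" "i1 < K" "i2 < K"
    "t \<in> block i1" "t \<in> block i2" "odd_count t = j" "lamB (ord i1) t \<noteq> 0" "lamB (ord i2) t \<noteq> 0"
    unfolding U_eq by blast
  have "\<tau> s = \<tau> t"
    using step.IH[OF t(3,5,7,8)] t(1) by simp
  also have "\<tau> t = \<tau> s'"
    using offset_label_global_eq[OF j t(4,6,7,9) step.prems(1-4)] t(2) step.prems(5) by simp
  finally show ?case .
qed

lemma rep_zero_iff:
  assumes "j \<in> {1, 2}"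
  shows "rep j l = 0 \<longleftrightarrow> l = 0"
proof -
  have "(a, b) \<in> U j \<Longrightarrow> 0 < a \<and> 0 < b" for a b
    unfolding U_eq g_eq by auto
  then show ?thesis
    using rtrancl_positive_zero_iff rep assms by metis
qed

lemma lab_zero_iff:
  assumes "t \<in> T" "odd_count t \<in> {1, 2}"
  shows "lab t = 0 \<longleftrightarrow> \<tau> t = 0"
proof -
  obtain i where i: "i < K" "t \<in> block i" "lab t = rep (odd_count t) (g i t)"
    using lab_12cells assms by blast
  then have "lab t = 0 \<longleftrightarrow> lamB (ord i) t = 0"
    using rep_zero_iff[OF assms(2)] offset_label_zero_iff by simp
  then show ?thesis
    using block_zero_iff_global[OF block_LABEL_box[OF i(1)] i(2) assms(2)] by simp
qed

lemma lab_global_eq: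
  assumes t: "t \<in> T" "t' \<in> T" "odd_count t = j" "odd_count t' = j" "j \<in> {1, 2}"
    and eq: "lab t = lab t'"
  shows "\<tau> t = \<tau> t'"
proof -
  obtain i where i: "i < K" "t \<in> block i" "lab t = rep j (g i t)"
    using lab_12cells[rule_format, OF t(1)] t(3,5) by auto
  obtain i' where i': "i' < K" "t' \<in> block i'" "lab t' = rep j (g i' t')"
    using lab_12cells[rule_format, OF t(2)] t(4,5) by auto
  have "rep j (g i t) = rep j (g i' t')"
    using i(3) i'(3) eq by simp
  then have "(g i t, g i' t') \<in> (U j)\<^sup>*"
    using rep t(5) by blast
  show ?thesis
  proof (cases "lab t = 0")
    case True
    then show ?thesis
      using eq lab_zero_iff[OF t(1)] lab_zero_iff[OF t(2)] t(3-5) by simp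
  next
    case False
    then have "rep j (g i t) \<noteq> 0" "rep j (g i' t') \<noteq> 0"
      using i(3) i'(3) eq by simp_all
    then have "g i t \<noteq> 0" "g i' t' \<noteq> 0"
      using rep_zero_iff[OF t(5)] by simp_all
    then have "lamB (ord i) t \<noteq> 0" "lamB (ord i') t' \<noteq> 0"
      by (simp_all add: offset_label_zero_iff)
    then show ?thesis
      using merged_label_global_eq[OF \<open>(g i t, g i' t') \<in> (U j)\<^sup>*\<close> t(5) i(1,2) t(3) _ refl i'(1,2) t(4)]
      by simp
  qed
qed

lemma lab_active_0cell:
  assumes t: "t \<in> T" "odd_count t = 0" "\<tau> t \<noteq> 0"
  shows "lab t \<noteq> 0"
proof -
  obtain i where i: "i < K" "t \<in> block i" "lab t = g i t"
    using lab_0cells t by blast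
  note box = block_LABEL_box[OF i(1)]
  let ?lam = "lamB (ord i)"
  have "theta T \<tau> t \<noteq> {}"
    using LABEL_box_zero_iff[OF global_LABEL t(1)] t(2,3) by simp
  then obtain e where e: "e \<in> Gamma T t" "\<tau> e \<in> theta T \<tau> t"
    using theta_subset_image by fastforce
  have e_block: "e \<in> block i" "odd_count e = 1"
    using LABEL_box_Gamma_mem[OF box i(2) e(1)] t(2) by simp_all
  have "?lam e \<noteq> 0"
    using e(2) block_zero_iff_global[OF box e_block(1)] e_block(2) by (auto simp: theta_def)
  moreover have "s = e" if "s \<in> Gamma T t" "?lam s = ?lam e" for s
  proof -
    have "s \<in> block i" "odd_count s = 1"
      using LABEL_box_Gamma_mem[OF box i(2) that(1)] t(2) by simp_all
    then have "\<tau> s = \<tau> e"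
      using global_eq_if_block_eq[OF box _ e_block(1) _ e_block(2)] that(2) \<open>?lam e \<noteq> 0\<close> by simp
    then show ?thesis
      using e mem_theta_iff[OF e(1)] that(1) by blast
  qed
  ultimately have "?lam e \<in> theta T ?lam t"
    using mem_theta_iff[OF e(1)] by simp
  then have "?lam t \<noteq> 0"
    using LABEL_box_zero_iff[OF box i(2)] t(2) by auto
  then show ?thesis
    using i(3) offset_label_zero_iff by simp
qed

definition step4_invariant :: "(cell \<Rightarrow> nat) \<Rightarrow> bool" where
  "step4_invariant c \<longleftrightarrow> (\<forall>s. odd_count s = 2 \<longrightarrow> c s = lab s) \<and>
     (\<forall>e\<in>T. odd_count e = 1 \<longrightarrow> (c e = 0 \<longleftrightarrow> \<tau> e = 0)) \<and>
     (\<forall>e\<in>T. \<forall>e'\<in>T. odd_count e = 1 \<longrightarrow> odd_count e' = 1 \<longrightarrow> c e = c e' \<longrightarrow> \<tau> e = \<tau> e')"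

lemma step4_invariantD:
  assumes "step4_invariant c"
  shows "odd_count s = 2 \<Longrightarrow> c s = lab s"
    and "e \<in> T \<Longrightarrow> odd_count e = 1 \<Longrightarrow> c e = 0 \<longleftrightarrow> \<tau> e = 0"
    and "e \<in> T \<Longrightarrow> e' \<in> T \<Longrightarrow> odd_count e = 1 \<Longrightarrow> odd_count e' = 1 \<Longrightarrow> c e = c e' \<Longrightarrow> \<tau> e = \<tau> e'"
  using assms unfolding step4_invariant_def by blast+

lemma step4_invariant_lab: "step4_invariant lab"
  unfolding step4_invariant_def
proof (intro conjI ballI allI impI)
  fix e assume "e \<in> T" "odd_count e = 1"
  then show "lab e = 0 \<longleftrightarrow> \<tau> e = 0"
    using lab_zero_iff by simp
next
  fix e e' assume "e \<in> T" "e' \<in> T" "odd_count e = 1" "odd_count e' = 1" "lab e = lab e'"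
  then show "\<tau> e = \<tau> e'"
    using lab_global_eq[of e e' 1] by simp
qed simp

lemma merge_pair_global_eq:
  assumes inv: "step4_invariant c" and t0: "t0 \<in> T" "odd_count t0 = 0"
    and pair: "(l, l') \<in> merge_pairs T c t0"
  obtains e e' where "e \<in> Gamma T t0" "e' \<in> Gamma T t0" "l = c e" "l' = c e'" "\<tau> e = \<tau> e'"
proof -
  obtain e e' where ee: "e \<in> Gamma T t0" "e' \<in> Gamma T t0" "l = c e" "l' = c e'"
      "c e \<in> theta T c t0" "c e' \<in> theta T c t0" and same: "c ` Gamma T e = c ` Gamma T e'"
    using pair unfolding merge_pairs_def by blast
  have e: "e \<in> T" "odd_count e = 1" and e': "e' \<in> T" "odd_count e' = 1"
    using Gamma_memD[OF ee(1)] Gamma_memD[OF ee(2)] t0(2) by simp_all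
  have transfer: "\<tau> ` Gamma T a - {0} \<subseteq> \<tau> ` Gamma T b - {0}"
    if a: "odd_count a = 1" and b: "odd_count b = 1" and same_ab: "c ` Gamma T a = c ` Gamma T b" for a b
  proof (rule nonzero_image_transfer)
    have two_cell: "s \<in> T \<and> odd_count s = 2" if "s \<in> Gamma T a \<or> s \<in> Gamma T b" for s
      using that Gamma_memD[of s T a] Gamma_memD[of s T b] a b by auto
    then have "c s = lab s" if "s \<in> Gamma T a \<or> s \<in> Gamma T b" for s
      using that step4_invariantD(1)[OF inv] by blast
    then have "lab ` Gamma T a = lab ` Gamma T b"
      using same_ab by (simp cong: image_cong)
    then show "lab ` Gamma T a - {0} \<subseteq> lab ` Gamma T b - {0}"
      by simp
    show "\<forall>s\<in>Gamma T a. lab s = 0 \<longleftrightarrow> \<tau> s = 0"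
      using two_cell lab_zero_iff by simp
    show "\<forall>s\<in>Gamma T a. \<forall>s'\<in>Gamma T b. lab s' = lab s \<longrightarrow> \<tau> s' = \<tau> s"
    proof (intro ballI impI)
      fix s s' assume "s \<in> Gamma T a" "s' \<in> Gamma T b" "lab s' = lab s"
      then show "\<tau> s' = \<tau> s"
        using two_cell[of s] two_cell[of s'] lab_global_eq[of s' s 2] by simp
    qed
  qed
  have "c e \<noteq> 0" "c e' \<noteq> 0"
    using ee(5,6) by (simp_all add: theta_def)
  then have "\<tau> e \<noteq> 0" "\<tau> e' \<noteq> 0"
    using step4_invariantD(2)[OF inv e] step4_invariantD(2)[OF inv e'] by simp_all
  moreover have "connected_cells T e e'"
    using t0(1) ee(1,2) unfolding connected_cells_def by blast
  moreover have "\<tau> ` Gamma T e - {0} = \<tau> ` Gamma T e' - {0}"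
    using transfer[OF e(2) e'(2) same] transfer[OF e'(2) e(2) same[symmetric]] by blast
  ultimately have "\<tau> e = \<tau> e'"
    using global_eq_if_2cell_labels_eq[OF e(1) e'(1) e(2) e'(2)] by simp
  then show thesis
    using that ee(1-4) by blast
qed

lemma merge_pairs_pos: "(a, b) \<in> merge_pairs T c t0 \<Longrightarrow> 0 < a \<and> 0 < b"
  unfolding merge_pairs_def theta_def by auto

lemma merge_chain_global_eq:
  assumes inv: "step4_invariant c" and t0: "t0 \<in> T" "odd_count t0 = 0"
    and chain: "(x, y) \<in> (merge_pairs T c t0)\<^sup>*"
    and e: "e \<in> T" "odd_count e = 1" "c e = x"
  shows "\<And>e'. e' \<in> T \<Longrightarrow> odd_count e' = 1 \<Longrightarrow> c e' = y \<Longrightarrow> \<tau> e = \<tau> e'"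
  using chain
proof (induction rule: rtrancl_induct)
  case base
  then show ?case
    using step4_invariantD(3)[OF inv e(1)] e(2,3) by simp
next
  case (step y z)
  obtain e1 e2 where m: "e1 \<in> Gamma T t0" "e2 \<in> Gamma T t0" "y = c e1" "z = c e2" "\<tau> e1 = \<tau> e2"
    using merge_pair_global_eq[OF inv t0 step.hyps(2)] by blast
  have e1: "e1 \<in> T" "odd_count e1 = 1" and e2: "e2 \<in> T" "odd_count e2 = 1"
    using Gamma_memD[OF m(1)] Gamma_memD[OF m(2)] t0(2) by simp_all
  have "\<tau> e = \<tau> e1"
    using step.IH[OF e1] m(3) by simp
  also have "\<tau> e1 = \<tau> e'"
    using m(5) step4_invariantD(3)[OF inv e2(1) step.prems(1) e2(2) step.prems(2)] m(4) step.prems(3)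
    by simp
  finally show ?case .
qed

lemma step4_atE:
  assumes "step4_at TT c c' t0"
  obtains \<rho> where "\<forall>l l'. \<rho> l = \<rho> l' \<longleftrightarrow> (l, l') \<in> (merge_pairs TT c t0)\<^sup>*"
    "\<forall>l. (l, \<rho> l) \<in> (merge_pairs TT c t0)\<^sup>*"
    "c' = (\<lambda>t. if t = t0 \<and> merge_pairs TT c t0 \<noteq> {} \<and>
        theta TT (\<lambda>t. if odd_count t = 1 then \<rho> (c t) else c t) t0 = {} then 0
      else if odd_count t = 1 then \<rho> (c t) else c t)"
  using assms unfolding step4_at_def Let_def by auto

lemma step4_at_invariant:
  assumes inv: "step4_invariant c" and step: "step4_at T c c' t0" and t0: "t0 \<in> T" "odd_count t0 = 0"
  shows "step4_invariant c'"
proof -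
  obtain \<rho> where \<rho>: "\<forall>l l'. \<rho> l = \<rho> l' \<longleftrightarrow> (l, l') \<in> (merge_pairs T c t0)\<^sup>*"
    "\<forall>l. (l, \<rho> l) \<in> (merge_pairs T c t0)\<^sup>*"
    and c': "c' = (\<lambda>t. if t = t0 \<and> merge_pairs T c t0 \<noteq> {} \<and>
        theta T (\<lambda>t. if odd_count t = 1 then \<rho> (c t) else c t) t0 = {} then 0
      else if odd_count t = 1 then \<rho> (c t) else c t)"
    using step by (rule step4_atE)
  have \<rho>_zero: "\<rho> l = 0 \<longleftrightarrow> l = 0" for l
    using rtrancl_positive_zero_iff[OF merge_pairs_pos \<rho>(2)[rule_format, of l]] by simp
  have c'_pos: "c' t = (if odd_count t = 1 then \<rho> (c t) else c t)" if "odd_count t \<noteq> 0" for t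
    using that t0(2) unfolding c' by auto
  show ?thesis
    unfolding step4_invariant_def
  proof (intro conjI ballI allI impI)
    fix s assume "odd_count s = 2"
    then show "c' s = lab s"
      using c'_pos[of s] step4_invariantD(1)[OF inv] by simp
  next
    fix e assume "e \<in> T" "odd_count e = 1"
    then show "c' e = 0 \<longleftrightarrow> \<tau> e = 0"
      using c'_pos[of e] \<rho>_zero step4_invariantD(2)[OF inv] by simp
  next
    fix e e' assume e: "e \<in> T" "e' \<in> T" "odd_count e = 1" "odd_count e' = 1" "c' e = c' e'"
    then have "(c e, c e') \<in> (merge_pairs T c t0)\<^sup>*"
      using c'_pos[of e] c'_pos[of e'] \<rho>(1) by simp
    then show "\<tau> e = \<tau> e'"
      using merge_chain_global_eq[OF inv t0 _ e(1,3) refl e(2,4) refl] by simp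
  qed
qed

lemma step4_at_keeps_active_0cell:
  assumes inv: "step4_invariant c" and step: "step4_at T c c' t0" and t0: "t0 \<in> T" "odd_count t0 = 0"
    and t: "t \<in> T" "odd_count t = 0" "\<tau> t \<noteq> 0"
  shows "c' t = c t"
proof -
  let ?R = "merge_pairs T c t0"
  obtain \<rho> where \<rho>: "\<forall>l l'. \<rho> l = \<rho> l' \<longleftrightarrow> (l, l') \<in> ?R\<^sup>*" "\<forall>l. (l, \<rho> l) \<in> ?R\<^sup>*"
    and c': "c' = (\<lambda>t. if t = t0 \<and> ?R \<noteq> {} \<and>
        theta T (\<lambda>t. if odd_count t = 1 then \<rho> (c t) else c t) t0 = {} then 0
      else if odd_count t = 1 then \<rho> (c t) else c t)"
    using step by (rule step4_atE)
  define c1 where "c1 t = (if odd_count t = 1 then \<rho> (c t) else c t)" for t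
  \<comment> \<open>The 1-cell carrying the unique \<open>\<tau>\<close>-label around \<open>t0\<close> takes part in no merge, so its label
    stays unique around \<open>t0\<close>.\<close>
  show ?thesis
  proof (cases "t = t0")
    case False
    then show ?thesis
      using t(2) unfolding c' by simp
  next
    case True
    have "theta T \<tau> t0 \<noteq> {}"
      using LABEL_box_zero_iff[OF global_LABEL t(1)] t(2,3) True by simp
    then obtain e where e: "e \<in> Gamma T t0" "\<tau> e \<in> theta T \<tau> t0"
      using theta_subset_image by fastforce
    have e_cell: "e \<in> T" "odd_count e = 1"
      using Gamma_memD[OF e(1)] t0(2) by simp_all
    have e_unique: "e' = e" if "e' \<in> Gamma T t0" "\<tau> e' = \<tau> e" for e'
      using e mem_theta_iff[OF e(1)] that by blast
    have c_unique: "e' = e" if "e' \<in> Gamma T t0" "c e' = c e" for e'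
    proof -
      have "e' \<in> T" "odd_count e' = 1"
        using Gamma_memD[OF that(1)] t0(2) by simp_all
      then show ?thesis
        using e_unique[OF that(1)] step4_invariantD(3)[OF inv _ e_cell(1) _ e_cell(2) that(2)] by simp
    qed
    have untouched: "a \<noteq> c e \<and> b \<noteq> c e" if ab: "(a, b) \<in> ?R" for a b
    proof -
      obtain e1 e2 where m: "e1 \<in> Gamma T t0" "e2 \<in> Gamma T t0" "a = c e1" "b = c e2" "\<tau> e1 = \<tau> e2"
        using merge_pair_global_eq[OF inv t0 ab] by blast
      have "a \<noteq> b"
        using ab unfolding merge_pairs_def by blast
      then show ?thesis
        using m c_unique e_unique by metis
    qed
    have "(c e, \<rho> (c e)) \<in> ?R\<^sup>*"
      using \<rho>(2) by blast
    then have "\<rho> (c e) = c e"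
      by (cases rule: converse_rtranclE) (auto dest: untouched)
    have "{s \<in> Gamma T t0. c1 s = c e} = {e}"
    proof (intro equalityI subsetI)
      fix s assume "s \<in> {s \<in> Gamma T t0. c1 s = c e}"
      then have s: "s \<in> Gamma T t0" "\<rho> (c s) = \<rho> (c e)"
        using Gamma_memD[of s T t0] t0(2) \<open>\<rho> (c e) = c e\<close> unfolding c1_def by auto
      then have "(c s, c e) \<in> ?R\<^sup>*"
        using \<rho>(1) by blast
      then have "c s = c e"
        by (cases rule: rtranclE) (auto dest: untouched)
      then show "s \<in> {e}"
        using c_unique s(1) by blast
    qed (use e(1) e_cell \<open>\<rho> (c e) = c e\<close> in \<open>simp add: c1_def\<close>)
    moreover have "c e \<noteq> 0"
      using e(2) step4_invariantD(2)[OF inv e_cell] by (simp add: theta_def)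
    ultimately have "c e \<in> theta T c1 t0"
      unfolding theta_def by simp
    then show ?thesis
      using True t(2) unfolding c' c1_def by auto
  qed
qed

lemma step4_run_keeps_active_0cells:
  assumes ts: "set ts \<subseteq> {t \<in> T. odd_count t = 0}" and start: "cs 0 = lab"
    and steps: "\<forall>i < length ts. step4_at T (cs i) (cs (Suc i)) (ts ! i)"
    and t: "t \<in> T" "odd_count t = 0" "\<tau> t \<noteq> 0"
  shows "cs (length ts) t \<noteq> 0"
proof -
  have "i \<le> length ts \<Longrightarrow> step4_invariant (cs i) \<and> cs i t = lab t" for i
  proof (induction i)
    case 0
    then show ?case
      using start step4_invariant_lab by simp
  next
    case (Suc i)
    then have "ts ! i \<in> set ts"
      by simp
    then have t0: "ts ! i \<in> T" "odd_count (ts ! i) = 0"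
      using ts by auto
    have IH: "step4_invariant (cs i)" "cs i t = lab t"
      using Suc by simp_all
    have "step4_at T (cs i) (cs (Suc i)) (ts ! i)"
      using steps Suc.prems by simp
    then show ?case
      using step4_at_invariant[OF IH(1) _ t0] step4_at_keeps_active_0cell[OF IH(1) _ t0 t] IH(2) by simp
  qed
  then show ?thesis
    using lab_active_0cell[OF t] by simp
qed

end

lemma blockwise_outputE:
  assumes "global_labelling n1 n2 n3 \<sigma> \<tau> mT"
    and "valid_axis n1 a1" "valid_axis n2 a2" "valid_axis n3 a3"
    and "blockwise_output n1 n2 n3 \<sigma> a1 a2 a3 \<tau>'"
  obtains K ord lamB mB off g U rep lab ts cs where
    "blockwise_run n1 n2 n3 \<sigma> \<tau> mT a1 a2 a3 K ord lamB mB off g U rep lab"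
    "set ts = {t \<in> Tgrid n1 n2 n3. odd_count t = 0}" "cs 0 = lab"
    "\<forall>i < length ts. step4_at (Tgrid n1 n2 n3) (cs i) (cs (Suc i)) (ts ! i)"
    "\<tau>' = cs (length ts)"
proof -
  let ?K = "card (block_indices a1 a2 a3)"
  from assms(5) obtain ord lamB mB rep lab ts cs where
    run: "let off = (\<lambda>j i. \<Sum>i'<i. mB (ord i') j);
        g = (\<lambda>i t. if lamB (ord i) t = 0 then 0 else lamB (ord i) t + off (odd_count t) i);
        U = (\<lambda>j. {(g i t, g i' t) | i i' t. i < ?K \<and> i' < ?K \<and>
          t \<in> blk a1 a2 a3 (ord i) \<and> t \<in> blk a1 a2 a3 (ord i') \<and> odd_count t = j \<and>
          lamB (ord i) t \<noteq> 0 \<and> lamB (ord i') t \<noteq> 0})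
      in blockwise_run n1 n2 n3 \<sigma> \<tau> mT a1 a2 a3 ?K ord lamB mB off g U rep lab"
    and step4: "set ts = {t \<in> Tgrid n1 n2 n3. odd_count t = 0}" "cs 0 = lab"
      "\<forall>i < length ts. step4_at (Tgrid n1 n2 n3) (cs i) (cs (Suc i)) (ts ! i)" "\<tau>' = cs (length ts)"
    unfolding blockwise_output_def
    by (simp add: Let_def blockwise_run_def blockwise_run_axioms_def assms(1-4)) blast
  then show thesis
    using that unfolding Let_def by blast
qed

theorem proposition6:
  fixes n1 n2 n3 :: nat
    and \<sigma> \<tau> \<tau>' :: "cell \<Rightarrow> nat"
    and mT :: "nat \<Rightarrow> nat"
    and a1 a2 a3 :: "nat list"
  assumes "1 \<le> n1" and "1 \<le> n2" and "1 \<le> n3"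
    and "segment_label_map n1 n2 n3 \<sigma>"
    and "valid_axis n1 a1" and "valid_axis n2 a2" and "valid_axis n3 a3"
    and "is_LABEL (Tgrid n1 n2 n3) \<sigma> (Tgrid n1 n2 n3) \<tau> mT"
    and "blockwise_output n1 n2 n3 \<sigma> a1 a2 a3 \<tau>'"
  shows "\<forall>t \<in> Tgrid n1 n2 n3. odd_count t = 0 \<longrightarrow> \<tau> t \<noteq> 0 \<longrightarrow> \<tau>' t \<noteq> 0"
proof -
  have grid: "voxel_grid n1 n2 n3 \<sigma>"
    using assms(4) by unfold_locales (simp add: segment_label_map_def)
  have "global_labelling n1 n2 n3 \<sigma> \<tau> mT"
    using assms(8) voxel_grid.LABEL_box_Tgrid[OF grid]
    by (intro global_labelling.intro grid global_labelling_axioms.intro) simp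
  then obtain K ord lamB mB off g U rep lab ts cs where
    run: "blockwise_run n1 n2 n3 \<sigma> \<tau> mT a1 a2 a3 K ord lamB mB off g U rep lab"
    and step4: "set ts = {t \<in> Tgrid n1 n2 n3. odd_count t = 0}" "cs 0 = lab"
      "\<forall>i < length ts. step4_at (Tgrid n1 n2 n3) (cs i) (cs (Suc i)) (ts ! i)"
    and result: "\<tau>' = cs (length ts)"
    using assms(5-7,9) by (rule blockwise_outputE)
  show ?thesis
    using blockwise_run.step4_run_keeps_active_0cells[OF run _ step4(2,3)] step4(1) result by simp
qed

end
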